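(* Let $\mathcal{G}$ be a grounded degree sandwich monotone graph class and let $(G,\omega)$ be a weighted graph. Then $(G,\omega)$ is a level-$\mathcal{G}$ weighted graph if and only if $G\in\mathcal{G}$ and every degree-minimal edge elimination scheme of $(G,\omega)$ is a sorted $\mathcal{G}$-safe edge elimination scheme.
   Context: All graphs are finite, simple and undirected. A weighted graph is a pair $(G,\omega)$ with $\omega:E(G)\to\{1,\dots,k\}$ surjective for some $k\ge1$. For $1\le i\le k+1$, the $i$-th level graph of $(G,\omega)$ is obtained from $G$ by removing all edges $e$ with $\omega(e)<i$; $(G,\omega)$ is level-$\mathcal{G}$ if all level graphs are in $\mathcal{G}$. For $G\in\mathcal{G}$, $F\subseteq E(G)$ (resp. edge $e$) is $\mathcal{G}$-safe if $G-F\in\mathcal{G}$ (resp. $G-e\in\mathcal{G}$); $\mathcal{G}$ is grounded if $E(G)$ is $\mathcal{G}$-safe for every $G\in\mathcal{G}$. Given a graph $H$ and $F\subseteq E(H)$, an edge $e\in F$ is degree-minimal in $F$ if its endpoints can be named $u,v$ so that (i) $u$ has the smallest degree in $H$ among all vertices incident to an edge of $F$, and (ii) $v$ has the smallest degree in $H$ among all $w$ with $uw\in F$. $\mathcal{G}$ is degree sandwich monotone if for each $G\in\mathcal{G}$ and each $\mathcal{G}$-safe $F\subseteq E(G)$, every degree-minimal edge in $F$ is $\mathcal{G}$-safe. For an edge ordering $\tau=(e_1,\dots,e_m)$ let $G^i_\tau=G-\{e_1,\dots,e_i\}$, $G^0_\tau=G$. A $\mathcal{G}$-safe edge elimination scheme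 of $G$ is an edge ordering with $G^i_\tau\in\mathcal{G}$ for all $i\in\{1,\dots,m\}$; it is sorted if $i<j$ implies $\omega(e_i)\le\omega(e_j)$. A degree-minimal edge elimination scheme of $(G,\omega)$ is an edge ordering such that for every $i$, $e_i$ is degree-minimal (degrees in $G^{i-1}_\tau$) in the set of minimum-weight edges of $G^{i-1}_\tau$. *)

theory Defs
  imports Main
begin

type_synonym 'a graph = "'a set \<times> 'a set set"

definition graph :: "'a graph \<Rightarrow> bool" where
  "graph G \<longleftrightarrow> finite (fst G) \<and>
     (\<forall>e\<in>snd G. \<exists>u v. e = {u, v} \<and> u \<noteq> v \<and> u \<in> fst G \<and> v \<in> fst G)"

definition del_edges :: "'a graph \<Rightarrow> 'a set set \<Rightarrow> 'a graph" where
  "del_edges G F = (fst G, snd G - F)"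

definition deg :: "'a set set \<Rightarrow> 'a \<Rightarrow> nat" where
  "deg E v = card {e \<in> E. v \<in> e}"

definition safe :: "'a graph set \<Rightarrow> 'a graph \<Rightarrow> 'a set set \<Rightarrow> bool" where
  "safe \<G> G F \<longleftrightarrow> del_edges G F \<in> \<G>"

definition grounded :: "'a graph set \<Rightarrow> bool" where
  "grounded \<G> \<longleftrightarrow> (\<forall>G\<in>\<G>. graph G \<longrightarrow> safe \<G> G (snd G))"

definition degree_minimal :: "'a set set \<Rightarrow> 'a set set \<Rightarrow> 'a set \<Rightarrow> bool" where
  "degree_minimal E F e \<longleftrightarrow> e \<in> F \<and>
     (\<exists>u v. e = {u, v} \<and>
        (\<forall>w. (\<exists>f\<in>F. w \<in> f) \<longrightarrow> deg E u \<le> deg E w) \<and>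
        (\<forall>w. {u, w} \<in> F \<longrightarrow> deg E v \<le> deg E w))"

definition degree_sandwich_monotone :: "'a graph set \<Rightarrow> bool" where
  "degree_sandwich_monotone \<G> \<longleftrightarrow>
     (\<forall>G\<in>\<G>. graph G \<longrightarrow> (\<forall>F. F \<subseteq> snd G \<longrightarrow> safe \<G> G F \<longrightarrow>
        (\<forall>e. degree_minimal (snd G) F e \<longrightarrow> safe \<G> G {e})))"

definition weighted_graph :: "'a graph \<Rightarrow> ('a set \<Rightarrow> nat) \<Rightarrow> nat \<Rightarrow> bool" where
  "weighted_graph G \<omega> k \<longleftrightarrow> graph G \<and> k \<ge> 1 \<and> \<omega> ` snd G = {1..k}"

definition level_graph :: "'a graph \<Rightarrow> ('a set \<Rightarrow> nat) \<Rightarrow> nat \<Rightarrow> 'a graph" where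
  "level_graph G \<omega> i = del_edges G {e \<in> snd G. \<omega> e < i}"

definition level_class :: "'a graph set \<Rightarrow> 'a graph \<Rightarrow> ('a set \<Rightarrow> nat) \<Rightarrow> nat \<Rightarrow> bool" where
  "level_class \<G> G \<omega> k \<longleftrightarrow> (\<forall>i\<in>{1..k+1}. level_graph G \<omega> i \<in> \<G>)"

definition edge_ordering :: "'a graph \<Rightarrow> 'a set list \<Rightarrow> bool" where
  "edge_ordering G \<tau> \<longleftrightarrow> distinct \<tau> \<and> set \<tau> = snd G"

definition step_graph :: "'a graph \<Rightarrow> 'a set list \<Rightarrow> nat \<Rightarrow> 'a graph" where
  "step_graph G \<tau> i = del_edges G (set (take i \<tau>))"

definition safe_scheme :: "'a graph set \<Rightarrow> 'a graph \<Rightarrow> 'a set list \<Rightarrow> bool" where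
  "safe_scheme \<G> G \<tau> \<longleftrightarrow> edge_ordering G \<tau> \<and>
     (\<forall>i\<in>{1..length \<tau>}. step_graph G \<tau> i \<in> \<G>)"

definition sorted_scheme :: "('a set \<Rightarrow> nat) \<Rightarrow> 'a set list \<Rightarrow> bool" where
  "sorted_scheme \<omega> \<tau> \<longleftrightarrow> (\<forall>i j. i < j \<and> j < length \<tau> \<longrightarrow> \<omega> (\<tau> ! i) \<le> \<omega> (\<tau> ! j))"

definition min_weight_edges :: "('a set \<Rightarrow> nat) \<Rightarrow> 'a set set \<Rightarrow> 'a set set" where
  "min_weight_edges \<omega> E = {e \<in> E. \<forall>f\<in>E. \<omega> e \<le> \<omega> f}"

definition degree_minimal_scheme :: "'a graph \<Rightarrow> ('a set \<Rightarrow> nat) \<Rightarrow> 'a set list \<Rightarrow> bool" where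
  "degree_minimal_scheme G \<omega> \<tau> \<longleftrightarrow> edge_ordering G \<tau> \<and>
     (\<forall>i < length \<tau>. let H = snd (step_graph G \<tau> i) in
        degree_minimal H (min_weight_edges \<omega> H) (\<tau> ! i))"

end

theory Submission
  imports Defs
begin

(* A degree-minimal scheme always removes an edge of least weight among the remaining ones,
   so it is sorted. In a sorted scheme the edges of weight below i form a prefix, hence every
   level graph is one of the graphs G^j of the scheme, and a safe sorted scheme makes (G, \<omega>)
   level-\<G>. Conversely, at step j the least-weight edges F of G^j are exactly the remaining edges
   of weight \<omega>(e_j), so G^j - F is the level graph \<omega>(e_j) + 1 and F is \<G>-safe in G^j; degree
   sandwich monotonicity then makes the degree-minimal edge e_j safe, i.e. G^(j+1) is in \<G>. *)

lemma sorted_scheme_iff_sorted_map: "sorted_scheme \<omega> \<tau> \<longleftrightarrow> sorted (map \<omega> \<tau>)"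
  unfolding sorted_scheme_def sorted_iff_nth_mono_less by auto

lemma graph_finite_edges:
  assumes "graph G" shows "finite (snd G)"
proof (rule finite_subset)
  show "snd G \<subseteq> Pow (fst G)"
    using assms unfolding graph_def by fastforce
  show "finite (Pow (fst G))"
    using assms unfolding graph_def by simp
qed

lemma graph_del_edges: "graph G \<Longrightarrow> graph (del_edges G F)"
  unfolding graph_def del_edges_def by simp

lemma del_edges_empty [simp]: "del_edges G {} = G"
  by (simp add: del_edges_def)

lemma step_graph_0 [simp]: "step_graph G \<tau> 0 = G"
  by (simp add: step_graph_def)

lemma step_graph_Suc:
  "i < length \<tau> \<Longrightarrow> step_graph G \<tau> (Suc i) = del_edges (step_graph G \<tau> i) {\<tau> ! i}"
  by (auto simp: step_graph_def del_edges_def take_Suc_conv_app_nth)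

lemma edges_step_graph:
  assumes "edge_ordering G \<tau>"
  shows "snd (step_graph G \<tau> i) = set (drop i \<tau>)"
proof -
  have "set \<tau> = set (take i \<tau>) \<union> set (drop i \<tau>)"
    by (metis append_take_drop_id set_append)
  moreover have "set (take i \<tau>) \<inter> set (drop i \<tau>) = {}"
    using assms by (simp add: edge_ordering_def set_take_disj_set_drop_if_distinct)
  ultimately show ?thesis
    using assms by (auto simp: edge_ordering_def step_graph_def del_edges_def)
qed

lemma ex_degree_minimal:
  assumes "e \<in> F" and "\<forall>f\<in>F. \<exists>u v. f = {u, v}"
  shows "\<exists>e. degree_minimal E F e"
proof -
  obtain a b where "e = {a, b}"
    using assms by blast
  then have "\<exists>f\<in>F. a \<in> f"
    using assms(1) by blast
  then obtain u where u: "\<exists>f\<in>F. u \<in> f"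
    and u_least: "\<forall>w. (\<exists>f\<in>F. w \<in> f) \<longrightarrow> deg E u \<le> deg E w"
    using ex_has_least_nat[of "\<lambda>w. \<exists>f\<in>F. w \<in> f" a "deg E"] by blast
  have "\<exists>w. {u, w} \<in> F"
  proof -
    obtain f where "f \<in> F" "u \<in> f"
      using u by blast
    moreover obtain x y where "f = {x, y}"
      using \<open>f \<in> F\<close> assms(2) by blast
    ultimately show ?thesis
      by (auto simp: insert_commute)
  qed
  then obtain v where "{u, v} \<in> F" and "\<forall>w. {u, w} \<in> F \<longrightarrow> deg E v \<le> deg E w"
    using ex_has_least_nat[of "\<lambda>w. {u, w} \<in> F" _ "deg E"] by blast
  with u_least have "degree_minimal E F {u, v}"
    unfolding degree_minimal_def by blast
  then show ?thesis ..
qed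

lemma ex_min_weight_edge: "e \<in> E \<Longrightarrow> \<exists>f. f \<in> min_weight_edges \<omega> E"
  using ex_has_least_nat[of "\<lambda>e. e \<in> E" e \<omega>] unfolding min_weight_edges_def by blast

lemma min_weight_edges_eq_atMost:
  assumes "e \<in> E" and "\<forall>f\<in>E. \<omega> e \<le> \<omega> f"
  shows "min_weight_edges \<omega> E = {f \<in> E. \<omega> f \<le> \<omega> e}"
  using assms unfolding min_weight_edges_def by (blast intro: order_trans)

lemma degree_minimal_scheme_edge_ordering:
  "degree_minimal_scheme G \<omega> \<tau> \<Longrightarrow> edge_ordering G \<tau>"
  by (simp add: degree_minimal_scheme_def)

lemma degree_minimal_scheme_nth:
  assumes "degree_minimal_scheme G \<omega> \<tau>" and "i < length \<tau>"
  shows "degree_minimal (snd (step_graph G \<tau> i))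
    (min_weight_edges \<omega> (snd (step_graph G \<tau> i))) (\<tau> ! i)"
  using assms unfolding degree_minimal_scheme_def by (simp add: Let_def)

lemma degree_minimal_scheme_Cons:
  assumes "degree_minimal (snd G) (min_weight_edges \<omega> (snd G)) e"
    and "degree_minimal_scheme (del_edges G {e}) \<omega> \<tau>"
  shows "degree_minimal_scheme G \<omega> (e # \<tau>)"
proof -
  have "e \<in> snd G"
    using assms(1) by (simp add: degree_minimal_def min_weight_edges_def)
  then have "edge_ordering G (e # \<tau>)"
    using assms(2) by (auto simp: degree_minimal_scheme_def edge_ordering_def del_edges_def)
  moreover have "snd (step_graph G (e # \<tau>) (Suc i)) = snd (step_graph (del_edges G {e}) \<tau> i)"
    for i by (auto simp: step_graph_def del_edges_def)
  ultimately show ?thesis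
    using assms unfolding degree_minimal_scheme_def by (auto simp: less_Suc_eq_0_disj)
qed

lemma ex_degree_minimal_scheme: "graph G \<Longrightarrow> \<exists>\<tau>. degree_minimal_scheme G \<omega> \<tau>"
proof (induction G rule: measure_induct_rule[of "\<lambda>G. card (snd G)"])
  case (less G)
  show ?case
  proof (cases "snd G = {}")
    case True
    then have "degree_minimal_scheme G \<omega> []"
      by (simp add: degree_minimal_scheme_def edge_ordering_def)
    then show ?thesis ..
  next
    case False
    then obtain f where "f \<in> min_weight_edges \<omega> (snd G)"
      using ex_min_weight_edge by blast
    moreover have "\<forall>f\<in>min_weight_edges \<omega> (snd G). \<exists>u v. f = {u, v}"
      using less.prems unfolding graph_def min_weight_edges_def by (simp add: Ball_def) meson
    ultimately obtain e where e: "degree_minimal (snd G) (min_weight_edges \<omega> (snd G)) e"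
      using ex_degree_minimal by blast
    then have "e \<in> snd G"
      by (simp add: degree_minimal_def min_weight_edges_def)
    then have "card (snd (del_edges G {e})) < card (snd G)"
      unfolding del_edges_def snd_conv
      by (rule card_Diff1_less[OF graph_finite_edges[OF less.prems]])
    then obtain \<tau> where "degree_minimal_scheme (del_edges G {e}) \<omega> \<tau>"
      using less.IH graph_del_edges[OF less.prems] by blast
    then show ?thesis
      using degree_minimal_scheme_Cons[OF e] by blast
  qed
qed

lemma degree_minimal_scheme_sorted:
  assumes "degree_minimal_scheme G \<omega> \<tau>"
  shows "sorted (map \<omega> \<tau>)"
  unfolding sorted_iff_nth_mono
proof (intro allI impI)
  fix i j assume "i \<le> j" and "j < length (map \<omega> \<tau>)"
  then have "\<tau> ! j \<in> set (drop i \<tau>)"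
    using nth_mem[of "j - i" "drop i \<tau>"] by simp
  then have "\<tau> ! j \<in> snd (step_graph G \<tau> i)"
    using edges_step_graph degree_minimal_scheme_edge_ordering assms by blast
  moreover have "\<tau> ! i \<in> min_weight_edges \<omega> (snd (step_graph G \<tau> i))"
    using degree_minimal_scheme_nth[OF assms, of i] \<open>i \<le> j\<close> \<open>j < length (map \<omega> \<tau>)\<close>
    by (simp add: degree_minimal_def)
  ultimately show "map \<omega> \<tau> ! i \<le> map \<omega> \<tau> ! j"
    using \<open>i \<le> j\<close> \<open>j < length (map \<omega> \<tau>)\<close> by (simp add: min_weight_edges_def)
qed

lemma del_min_weight_edges_step_graph:
  assumes "edge_ordering G \<tau>" and "sorted (map \<omega> \<tau>)" and "i < length \<tau>"
  shows "del_edges (step_graph G \<tau> i) (min_weight_edges \<omega> (snd (step_graph G \<tau> i)))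
    = level_graph G \<omega> (\<omega> (\<tau> ! i) + 1)"
proof -
  let ?w = "\<omega> (\<tau> ! i)"
  have "sorted (map \<omega> (take i \<tau> @ drop i \<tau>))"
    using assms(2) by simp
  then have split: "\<forall>e\<in>set (take i \<tau>). \<forall>f\<in>set (drop i \<tau>). \<omega> e \<le> \<omega> f"
    unfolding map_append sorted_append by simp
  have "sorted (map \<omega> (drop i \<tau>))"
    using assms(2) sorted_wrt_drop by (metis drop_map)
  moreover have drop_i: "drop i \<tau> = \<tau> ! i # drop (Suc i) \<tau>"
    using assms(3) by (rule Cons_nth_drop_Suc[symmetric])
  ultimately have least: "\<forall>f\<in>set (drop i \<tau>). ?w \<le> \<omega> f"
    by simp
  have first: "\<tau> ! i \<in> set (drop i \<tau>)"
    by (simp add: drop_i)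
  have "snd G = set (take i \<tau>) \<union> set (drop i \<tau>)"
    using assms(1) unfolding edge_ordering_def by (metis append_take_drop_id set_append)
  then have "snd G - {e \<in> snd G. \<omega> e < ?w + 1}
      = set (drop i \<tau>) - {f \<in> set (drop i \<tau>). \<omega> f \<le> ?w}"
    using split first by fastforce
  then show ?thesis
    using edges_step_graph[OF assms(1), of i] min_weight_edges_eq_atMost[OF first least]
    by (simp add: level_graph_def step_graph_def del_edges_def)
qed

lemma level_graph_eq_step_graph:
  assumes "edge_ordering G \<tau>" and "sorted (map \<omega> \<tau>)"
  obtains j where "j \<le> length \<tau>" and "level_graph G \<omega> i = step_graph G \<tau> j"
proof
  let ?light = "\<lambda>e. \<omega> e < i"
  have "takeWhile ?light \<tau> = filter ?light \<tau>"
  proof (rule takeWhile_eq_filter)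
    fix x assume x: "x \<in> set (dropWhile ?light \<tau>)"
    then obtain y ys where y: "dropWhile ?light \<tau> = y # ys"
      by (cases "dropWhile ?light \<tau>") auto
    then have "\<not> ?light y"
      by (metis hd_dropWhile list.distinct(1) list.sel(1))
    moreover have "sorted_wrt (\<lambda>x y. \<omega> x \<le> \<omega> y) (y # ys)"
      using assms(2) y sorted_wrt_dropWhile[of _ \<tau> ?light] by (metis sorted_map)
    ultimately show "\<not> ?light x"
      using x y by auto
  qed
  then have "set (takeWhile ?light \<tau>) = {e \<in> snd G. ?light e}"
    using assms(1) by (simp add: edge_ordering_def)
  then show "level_graph G \<omega> i = step_graph G \<tau> (length (takeWhile ?light \<tau>))"
    by (simp add: level_graph_def step_graph_def flip: takeWhile_eq_take)
qed (rule length_takeWhile_le)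

lemma degree_sandwich_monotoneD:
  assumes "degree_sandwich_monotone \<G>" and "G \<in> \<G>" and "graph G"
    and "F \<subseteq> snd G" and "safe \<G> G F" and "degree_minimal (snd G) F e"
  shows "safe \<G> G {e}"
  using assms unfolding degree_sandwich_monotone_def by blast

lemma safe_scheme_step_graph_in:
  assumes "G \<in> \<G>" and "safe_scheme \<G> G \<tau>" and "j \<le> length \<tau>"
  shows "step_graph G \<tau> j \<in> \<G>"
  using assms unfolding safe_scheme_def by (cases j) auto

lemma level_graph_in_if_sorted_safe_scheme:
  assumes "G \<in> \<G>" and "safe_scheme \<G> G \<tau>" and "sorted (map \<omega> \<tau>)"
  shows "level_graph G \<omega> i \<in> \<G>"
proof -
  have "edge_ordering G \<tau>"
    using assms(2) by (simp add: safe_scheme_def)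
  then obtain j where "j \<le> length \<tau>" and "level_graph G \<omega> i = step_graph G \<tau> j"
    using assms(3) by (rule level_graph_eq_step_graph)
  then show ?thesis
    using safe_scheme_step_graph_in[OF assms(1,2)] by simp
qed

lemma degree_minimal_scheme_safe:
  assumes "degree_sandwich_monotone \<G>" and "graph G" and "G \<in> \<G>"
    and levels: "\<And>w. w \<in> \<omega> ` snd G \<Longrightarrow> level_graph G \<omega> (w + 1) \<in> \<G>"
    and scheme: "degree_minimal_scheme G \<omega> \<tau>"
  shows "safe_scheme \<G> G \<tau>"
proof -
  have ordering: "edge_ordering G \<tau>"
    using scheme by (rule degree_minimal_scheme_edge_ordering)
  have "step_graph G \<tau> i \<in> \<G>" if "i \<le> length \<tau>" for i
    using that
  proof (induction i)
    case 0
    then show ?case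
      using \<open>G \<in> \<G>\<close> by simp
  next
    case (Suc i)
    let ?H = "step_graph G \<tau> i"
    let ?F = "min_weight_edges \<omega> (snd ?H)"
    have i: "i < length \<tau>"
      using Suc.prems by simp
    have "\<tau> ! i \<in> snd G"
      using nth_mem[OF i] ordering by (simp add: edge_ordering_def)
    then have "safe \<G> ?H ?F"
      using del_min_weight_edges_step_graph[OF ordering degree_minimal_scheme_sorted[OF scheme] i]
        levels by (simp add: safe_def)
    moreover have "degree_minimal (snd ?H) ?F (\<tau> ! i)"
      using scheme i by (rule degree_minimal_scheme_nth)
    moreover have "?H \<in> \<G>" and "graph ?H"
      using Suc i graph_del_edges[OF \<open>graph G\<close>] by (simp_all add: step_graph_def)
    moreover have "?F \<subseteq> snd ?H"
      by (simp add: min_weight_edges_def)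
    ultimately have "safe \<G> ?H {\<tau> ! i}"
      using degree_sandwich_monotoneD[OF \<open>degree_sandwich_monotone \<G>\<close>] by blast
    then show ?case
      by (simp add: safe_def step_graph_Suc[OF i])
  qed
  with ordering show ?thesis
    by (simp add: safe_scheme_def)
qed

lemma weighted_graph_level_graph_1:
  assumes "weighted_graph G \<omega> k"
  shows "level_graph G \<omega> 1 = G"
proof -
  have "\<omega> e \<in> {1..k}" if "e \<in> snd G" for e
    using assms that unfolding weighted_graph_def by blast
  then have "{e \<in> snd G. \<omega> e < 1} = {}"
    by fastforce
  then show ?thesis
    unfolding level_graph_def by (simp only: del_edges_empty)
qed

theorem lemma3p1:
  fixes \<G> :: "'a graph set" and G :: "'a graph" and \<omega> :: "'a set \<Rightarrow> nat" and k :: nat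
  assumes "grounded \<G>"
    and "degree_sandwich_monotone \<G>"
    and "weighted_graph G \<omega> k"
  shows "level_class \<G> G \<omega> k \<longleftrightarrow>
    (G \<in> \<G> \<and> (\<forall>\<tau>. degree_minimal_scheme G \<omega> \<tau> \<longrightarrow>
                    safe_scheme \<G> G \<tau> \<and> sorted_scheme \<omega> \<tau>))"
proof -
  have "graph G" and weights: "\<omega> ` snd G = {1..k}"
    using assms(3) by (simp_all add: weighted_graph_def)
  show ?thesis
  proof
    assume levels: "level_class \<G> G \<omega> k"
    then have "G \<in> \<G>"
      using weighted_graph_level_graph_1[OF assms(3)] by (force simp: level_class_def)
    moreover have "level_graph G \<omega> (w + 1) \<in> \<G>" if "w \<in> \<omega> ` snd G" for w
      using levels that weights by (simp add: level_class_def)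
    ultimately show "G \<in> \<G> \<and> (\<forall>\<tau>. degree_minimal_scheme G \<omega> \<tau> \<longrightarrow>
        safe_scheme \<G> G \<tau> \<and> sorted_scheme \<omega> \<tau>)"
      unfolding sorted_scheme_iff_sorted_map
      by (blast intro: degree_minimal_scheme_safe[OF assms(2) \<open>graph G\<close>]
          degree_minimal_scheme_sorted)
  next
    assume schemes: "G \<in> \<G> \<and> (\<forall>\<tau>. degree_minimal_scheme G \<omega> \<tau> \<longrightarrow>
        safe_scheme \<G> G \<tau> \<and> sorted_scheme \<omega> \<tau>)"
    obtain \<tau> where "degree_minimal_scheme G \<omega> \<tau>"
      using ex_degree_minimal_scheme[OF \<open>graph G\<close>] ..
    with schemes have "G \<in> \<G>" and "safe_scheme \<G> G \<tau>" and "sorted (map \<omega> \<tau>)"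
      by (simp_all add: sorted_scheme_iff_sorted_map)
    then show "level_class \<G> G \<omega> k"
      unfolding level_class_def by (blast intro: level_graph_in_if_sorted_safe_scheme)
  qed
qed

end
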